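(* If $G$ and $H$ are infinite, connected, locally finite graphs, then $\beta(G\,\Box\, H)=\infty$.
   Context: The cartesian product $G\Box H$ has vertex set $V(G)\times V(H)$, where $(a,v)$ is adjacent to $(b,w)$ iff either $a=b$ and $vw\in E(H)$, or $v=w$ and $ab\in E(G)$. $d$ denotes shortest-path distance. A vertex $x$ resolves $u,v$ if $d(u,x)\ne d(v,x)$; a set of vertices is a resolving set if every pair of distinct vertices is resolved by some vertex of it. The metric dimension $\beta$ is the minimum cardinality of a resolving set if a finite one exists, and $\infty$ otherwise. *)

theory Defs
  imports Main "HOL-Library.Extended_Nat"
begin

definition graph :: "'a set \<Rightarrow> ('a \<Rightarrow> 'a \<Rightarrow> bool) \<Rightarrow> bool" where
  "graph V E \<longleftrightarrow> (\<forall>u v. E u v \<longrightarrow> u \<in> V \<and> v \<in> V) \<and> (\<forall>u v. E u v \<longrightarrow> E v u) \<and> (\<forall>v. \<not> E v v)"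

definition walk_of_length :: "('a \<Rightarrow> 'a \<Rightarrow> bool) \<Rightarrow> nat \<Rightarrow> 'a \<Rightarrow> 'a \<Rightarrow> bool" where
  "walk_of_length E n u v \<longleftrightarrow>
     (\<exists>xs. length xs = Suc n \<and> xs ! 0 = u \<and> xs ! n = v \<and> (\<forall>i<n. E (xs ! i) (xs ! Suc i)))"

definition dist :: "('a \<Rightarrow> 'a \<Rightarrow> bool) \<Rightarrow> 'a \<Rightarrow> 'a \<Rightarrow> enat" where
  "dist E u v = (if \<exists>n. walk_of_length E n u v then enat (LEAST n. walk_of_length E n u v) else \<infinity>)"

definition connected_graph :: "'a set \<Rightarrow> ('a \<Rightarrow> 'a \<Rightarrow> bool) \<Rightarrow> bool" where
  "connected_graph V E \<longleftrightarrow> (\<forall>u\<in>V. \<forall>v\<in>V. \<exists>n. walk_of_length E n u v)"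

definition locally_finite :: "'a set \<Rightarrow> ('a \<Rightarrow> 'a \<Rightarrow> bool) \<Rightarrow> bool" where
  "locally_finite V E \<longleftrightarrow> (\<forall>v\<in>V. finite {w. E v w})"

definition box_edge :: "'a set \<Rightarrow> ('a \<Rightarrow> 'a \<Rightarrow> bool) \<Rightarrow> 'b set \<Rightarrow> ('b \<Rightarrow> 'b \<Rightarrow> bool)
    \<Rightarrow> 'a \<times> 'b \<Rightarrow> 'a \<times> 'b \<Rightarrow> bool" where
  "box_edge V1 E1 V2 E2 p q \<longleftrightarrow>
     (fst p = fst q \<and> fst p \<in> V1 \<and> E2 (snd p) (snd q)) \<or>
     (snd p = snd q \<and> snd p \<in> V2 \<and> E1 (fst p) (fst q))"

definition resolves :: "('a \<Rightarrow> 'a \<Rightarrow> bool) \<Rightarrow> 'a \<Rightarrow> 'a \<Rightarrow> 'a \<Rightarrow> bool" where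
  "resolves E x u v \<longleftrightarrow> dist E u x \<noteq> dist E v x"

definition resolving_set :: "'a set \<Rightarrow> ('a \<Rightarrow> 'a \<Rightarrow> bool) \<Rightarrow> 'a set \<Rightarrow> bool" where
  "resolving_set V E W \<longleftrightarrow> W \<subseteq> V \<and>
     (\<forall>u\<in>V. \<forall>v\<in>V. u \<noteq> v \<longrightarrow> (\<exists>x\<in>W. resolves E x u v))"

definition metric_dim :: "'a set \<Rightarrow> ('a \<Rightarrow> 'a \<Rightarrow> bool) \<Rightarrow> enat" where
  "metric_dim V E =
     (if \<exists>W. finite W \<and> resolving_set V E W
      then enat (LEAST n. \<exists>W. finite W \<and> resolving_set V E W \<and> card W = n)
      else \<infinity>)"

end

theory Submission
  imports Defs
begin

text \<open>
  Call an edge \<open>x x'\<close> of a graph \<^emph>\<open>receding\<close> from a vertex set \<open>A\<close> if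
  stepping from \<open>x\<close> to \<open>x'\<close> increases the distance to every \<open>a \<in> A\<close> by exactly one.
  If \<open>x x'\<close> recedes from \<open>A\<close> in \<open>G\<close> and \<open>y y'\<close> recedes from \<open>B\<close> in \<open>H\<close>, then, since
  distances in \<open>G \<box> H\<close> add up coordinatewise, the distinct vertices \<open>(x', y)\<close> and
  \<open>(x, y')\<close> have the same distance to every vertex of \<open>A \<times> B\<close>.  So a finite set
  \<open>W\<close> cannot resolve \<open>G \<box> H\<close> once \<open>G\<close> has an edge receding from the first
  projection of \<open>W\<close> and \<open>H\<close> one receding from the second projection.

  The existence of receding edges is the heart of the proof: in an infinite,
  connected, locally finite graph the balls are finite, so there are geodesics
  from a root \<open>r\<close> of every length \<open>L\<close>.  Along a geodesic the total distance to
  the finite set \<open>A\<close> grows by at most \<open>|A| - 1\<close> per non-receding step, but it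
  must grow by about \<open>L |A|\<close> overall; for \<open>L > 2 \<Sum>\<^sub>a d(r,a)\<close> some step recedes.
\<close>

section \<open>Walks\<close>

text \<open>Walks as functions on \<open>{0..n}\<close>; this is more convenient than lists.\<close>
lemma walk_fun:
  "walk_of_length E n u v \<longleftrightarrow> (\<exists>f. f 0 = u \<and> f n = v \<and> (\<forall>i<n. E (f i) (f (Suc i))))"
proof
  assume "walk_of_length E n u v"
  then obtain xs where "length xs = Suc n" "xs ! 0 = u" "xs ! n = v" "\<forall>i<n. E (xs ! i) (xs ! Suc i)"
    unfolding walk_of_length_def by blast
  then show "\<exists>f. f 0 = u \<and> f n = v \<and> (\<forall>i<n. E (f i) (f (Suc i)))"
    by (intro exI[of _ "(!) xs"]) auto
next
  assume "\<exists>f. f 0 = u \<and> f n = v \<and> (\<forall>i<n. E (f i) (f (Suc i)))"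
  then obtain f where f: "f 0 = u" "f n = v" "\<forall>i<n. E (f i) (f (Suc i))" by blast
  have nth: "map f [0..<Suc n] ! i = f i" if "i \<le> n" for i
    using that by (metis add_0 diff_zero le_imp_less_Suc nth_map_upt)
  show "walk_of_length E n u v" unfolding walk_of_length_def
    by (intro exI[of _ "map f [0..<Suc n]"]) (use f nth in \<open>auto simp del: upt_Suc\<close>)
qed

lemma walk_0: "walk_of_length E 0 u v \<longleftrightarrow> u = v"
  unfolding walk_fun by auto

lemma walk_edge: "E u v \<Longrightarrow> walk_of_length E 1 u v"
  unfolding walk_fun by (intro exI[of _ "\<lambda>i. if i = 0 then u else v"]) auto

lemma walk_append:
  assumes "walk_of_length E m u v" "walk_of_length E n v w"
  shows "walk_of_length E (m + n) u w"
proof -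
  obtain f where f: "f 0 = u" "f m = v" "\<forall>i<m. E (f i) (f (Suc i))"
    using assms(1) unfolding walk_fun by blast
  obtain g where g: "g 0 = v" "g n = w" "\<forall>i<n. E (g i) (g (Suc i))"
    using assms(2) unfolding walk_fun by blast
  define h where "h i = (if i \<le> m then f i else g (i - m))" for i
  have "E (h i) (h (Suc i))" if i: "i < m + n" for i
  proof (cases "i < m")
    case True
    then show ?thesis using f unfolding h_def by auto
  next
    case False
    then have "Suc i - m = Suc (i - m)" by auto
    then show ?thesis using False g i f(2) unfolding h_def by (cases "i = m") auto
  qed
  moreover have "h 0 = u" "h (m + n) = w" using f g unfolding h_def by auto
  ultimately show ?thesis unfolding walk_fun by blast
qed

lemma walk_rev:
  assumes sym: "\<And>x y. E x y \<Longrightarrow> E y x" and "walk_of_length E n u v"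
  shows "walk_of_length E n v u"
proof -
  obtain f where f: "f 0 = u" "f n = v" "\<forall>i<n. E (f i) (f (Suc i))"
    using assms(2) unfolding walk_fun by blast
  have "E (f (n - i)) (f (n - Suc i))" if "i < n" for i
  proof -
    from that have "n - i = Suc (n - Suc i)" "n - Suc i < n" by auto
    then show ?thesis using f(3) sym by metis
  qed
  then show ?thesis unfolding walk_fun using f by (intro exI[of _ "\<lambda>i. f (n - i)"]) auto
qed

lemma walk_split:
  assumes "f 0 = u" "f n = v" "\<forall>i<n. E (f i) (f (Suc i))" "k \<le> n"
  shows "walk_of_length E k u (f k)" "walk_of_length E (n - k) (f k) v"
proof -
  show "walk_of_length E k u (f k)" unfolding walk_fun using assms by (intro exI[of _ f]) auto
  have "\<forall>i<n-k. E (f (k + i)) (f (Suc (k + i)))" "f (k + (n - k)) = v" using assms by auto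
  then show "walk_of_length E (n - k) (f k) v" unfolding walk_fun
    by (intro exI[of _ "\<lambda>i. f (k + i)"]) auto
qed

lemma walk_Suc_first:
  assumes "walk_of_length E (Suc n) u v"
  shows "\<exists>w. E u w \<and> walk_of_length E n w v"
proof -
  obtain f where f: "f 0 = u" "f (Suc n) = v" "\<forall>i<Suc n. E (f i) (f (Suc i))"
    using assms unfolding walk_fun by blast
  then have "walk_of_length E n (f 1) v" using walk_split(2)[OF f, of 1] by simp
  then show ?thesis using f by auto
qed

lemma walk_Suc_last:
  assumes "walk_of_length E (Suc n) u v"
  shows "\<exists>w. walk_of_length E n u w \<and> E w v"
proof -
  obtain f where f: "f 0 = u" "f (Suc n) = v" "\<forall>i<Suc n. E (f i) (f (Suc i))"
    using assms unfolding walk_fun by blast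
  then show ?thesis using walk_split(1)[OF f, of n] by auto
qed

lemma walk_in_V:
  assumes "graph V E" "walk_of_length E n u v" "u \<in> V"
  shows "v \<in> V"
proof (cases n)
  case 0
  then show ?thesis using assms(2,3) by (simp add: walk_0)
next
  case (Suc m)
  then obtain w where "E w v" using walk_Suc_last[of E m u v] assms(2) by blast
  then show ?thesis using assms(1) unfolding graph_def by simp
qed

text \<open>Between vertices joined by some walk, \<open>dist\<close> is the finite number \<open>gdist\<close>;
  working with \<open>gdist\<close> lets us use ordinary arithmetic.\<close>
definition gdist :: "('a \<Rightarrow> 'a \<Rightarrow> bool) \<Rightarrow> 'a \<Rightarrow> 'a \<Rightarrow> nat" where
  "gdist E u v = (LEAST n. walk_of_length E n u v)"

lemma walk_gdist: "walk_of_length E n u v \<Longrightarrow> walk_of_length E (gdist E u v) u v"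
  unfolding gdist_def by (rule LeastI)

lemma gdist_le: "walk_of_length E n u v \<Longrightarrow> gdist E u v \<le> n"
  unfolding gdist_def by (rule Least_le)

lemma dist_gdist: "walk_of_length E n u v \<Longrightarrow> dist E u v = enat (gdist E u v)"
  unfolding dist_def gdist_def by auto

lemma gdist_triangle:
  assumes "walk_of_length E m u v" "walk_of_length E n v w"
  shows "gdist E u w \<le> gdist E u v + gdist E v w"
  using gdist_le[OF walk_append[OF walk_gdist[OF assms(1)] walk_gdist[OF assms(2)]]] .

lemma gdist_sym:
  assumes sym: "\<And>x y. E x y \<Longrightarrow> E y x" and uv: "walk_of_length E n u v"
  shows "gdist E u v = gdist E v u"
proof -
  have vu: "walk_of_length E n v u" using walk_rev[OF sym uv] .
  show ?thesis
    using gdist_le[OF walk_rev[OF sym walk_gdist[OF uv]]]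
      gdist_le[OF walk_rev[OF sym walk_gdist[OF vu]]] by simp
qed

lemma gdist_edge_step:
  assumes sym: "\<And>x y. E x y \<Longrightarrow> E y x" and "E x x'" and "walk_of_length E n x a"
  shows "gdist E x' a \<le> gdist E x a + 1"
proof -
  have edge_back: "walk_of_length E 1 x' x" by (rule walk_edge[of E, OF sym[OF assms(2)]])
  show ?thesis using gdist_triangle[OF edge_back assms(3)] gdist_le[OF edge_back] by linarith
qed

section \<open>Distances in the cartesian product\<close>

lemma walk_box_fst:
  assumes "walk_of_length E1 n a b" "v \<in> V2"
  shows "walk_of_length (box_edge V1 E1 V2 E2) n (a, v) (b, v)"
proof -
  obtain f where f: "f 0 = a" "f n = b" "\<forall>i<n. E1 (f i) (f (Suc i))"
    using assms(1) unfolding walk_fun by blast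
  show ?thesis unfolding walk_fun using f assms(2)
    by (intro exI[of _ "\<lambda>i. (f i, v)"]) (auto simp: box_edge_def)
qed

lemma walk_box_snd:
  assumes "walk_of_length E2 n v w" "a \<in> V1"
  shows "walk_of_length (box_edge V1 E1 V2 E2) n (a, v) (a, w)"
proof -
  obtain f where f: "f 0 = v" "f n = w" "\<forall>i<n. E2 (f i) (f (Suc i))"
    using assms(1) unfolding walk_fun by blast
  show ?thesis unfolding walk_fun using f assms(2)
    by (intro exI[of _ "\<lambda>i. (a, f i)"]) (auto simp: box_edge_def)
qed

lemma walk_box_proj:
  "walk_of_length (box_edge V1 E1 V2 E2) n p q \<Longrightarrow>
   \<exists>m1 m2. m1 + m2 = n \<and> walk_of_length E1 m1 (fst p) (fst q) \<and> walk_of_length E2 m2 (snd p) (snd q)"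
proof (induction n arbitrary: p)
  case 0
  then show ?case by (simp add: walk_0)
next
  case (Suc n)
  obtain w where w: "box_edge V1 E1 V2 E2 p w" "walk_of_length (box_edge V1 E1 V2 E2) n w q"
    using walk_Suc_first[OF Suc.prems] by blast
  obtain m1 m2 where m: "m1 + m2 = n"
      "walk_of_length E1 m1 (fst w) (fst q)" "walk_of_length E2 m2 (snd w) (snd q)"
    using Suc.IH[OF w(2)] by blast
  from w(1) show ?case unfolding box_edge_def
  proof (elim disjE conjE)
    assume h: "fst p = fst w" "E2 (snd p) (snd w)"
    have "walk_of_length E2 (1 + m2) (snd p) (snd q)" using walk_append[OF walk_edge m(3)] h(2) .
    then show ?thesis using m h by (intro exI[of _ m1] exI[of _ "1 + m2"]) auto
  next
    assume h: "snd p = snd w" "E1 (fst p) (fst w)"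
    have "walk_of_length E1 (1 + m1) (fst p) (fst q)" using walk_append[OF walk_edge m(2)] h(2) .
    then show ?thesis using m h by (intro exI[of _ "1 + m1"] exI[of _ m2]) auto
  qed
qed

lemma dist_box:
  assumes c1: "connected_graph V1 E1" and c2: "connected_graph V2 E2"
    and a: "a \<in> V1" "b \<in> V1" and v: "v \<in> V2" "w \<in> V2"
  shows "dist (box_edge V1 E1 V2 E2) (a, v) (b, w) = enat (gdist E1 a b + gdist E2 v w)"
proof -
  obtain n1 where n1: "walk_of_length E1 n1 a b" using c1 a unfolding connected_graph_def by blast
  obtain n2 where n2: "walk_of_length E2 n2 v w" using c2 v unfolding connected_graph_def by blast
  let ?E = "box_edge V1 E1 V2 E2"
  have W: "walk_of_length ?E (gdist E1 a b + gdist E2 v w) (a, v) (b, w)"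
    using walk_append[OF walk_box_fst[OF walk_gdist[OF n1] v(1)] walk_box_snd[OF walk_gdist[OF n2] a(2)]] .
  obtain m1 m2 where m: "m1 + m2 = gdist ?E (a, v) (b, w)"
      "walk_of_length E1 m1 a b" "walk_of_length E2 m2 v w"
    using walk_box_proj[OF walk_gdist[OF W]] by auto
  then show ?thesis using dist_gdist[OF W] gdist_le[OF W] gdist_le[OF m(2)] gdist_le[OF m(3)] by simp
qed

section \<open>Receding edges and unresolved twins in the product\<close>

definition receding_edge :: "('a \<Rightarrow> 'a \<Rightarrow> bool) \<Rightarrow> 'a set \<Rightarrow> 'a \<Rightarrow> 'a \<Rightarrow> bool" where
  "receding_edge E A x x' \<longleftrightarrow> E x x' \<and> (\<forall>a\<in>A. gdist E x' a = gdist E x a + 1)"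

lemma receding_edges_twins:
  assumes c1: "connected_graph V1 E1" and c2: "connected_graph V2 E2"
    and x: "x \<in> V1" "x' \<in> V1" "receding_edge E1 A x x'"
    and y: "y \<in> V2" "y' \<in> V2" "receding_edge E2 B y y'"
    and a: "a \<in> A" "A \<subseteq> V1" and b: "b \<in> B" "B \<subseteq> V2"
  shows "dist (box_edge V1 E1 V2 E2) (x', y) (a, b) = dist (box_edge V1 E1 V2 E2) (x, y') (a, b)"
proof -
  have "gdist E1 x' a = gdist E1 x a + 1" "gdist E2 y' b = gdist E2 y b + 1"
    using x(3) y(3) a(1) b(1) unfolding receding_edge_def by auto
  moreover have "a \<in> V1" "b \<in> V2" using a b by auto
  ultimately show ?thesis using dist_box[OF c1 c2 x(2) _ y(1)] dist_box[OF c1 c2 x(1) _ y(2)] by simp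
qed

section \<open>Existence of receding edges\<close>

lemma finite_ball:
  assumes g: "graph V E" and lf: "locally_finite V E" and r: "r \<in> V"
  shows "finite {v. \<exists>n\<le>k. walk_of_length E n r v}"
proof (induction k)
  case 0
  have "{v. \<exists>n\<le>0. walk_of_length E n r v} = {r}" by (auto simp: walk_0)
  then show ?case by simp
next
  case (Suc k)
  let ?B = "{v. \<exists>n\<le>k. walk_of_length E n r v}"
  have sub: "{v. \<exists>n\<le>Suc k. walk_of_length E n r v} \<subseteq> ?B \<union> (\<Union>w\<in>?B. {x. E w x})"
  proof
    fix v assume "v \<in> {v. \<exists>n\<le>Suc k. walk_of_length E n r v}"
    then obtain n where n: "n \<le> Suc k" "walk_of_length E n r v" by blast
    show "v \<in> ?B \<union> (\<Union>w\<in>?B. {x. E w x})"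
    proof (cases n)
      case 0
      then show ?thesis using n(2) by blast
    next
      case (Suc m)
      then obtain w where "walk_of_length E m r w" "E w v" using walk_Suc_last[of E m r v] n(2) by blast
      then show ?thesis using n(1) Suc by auto
    qed
  qed
  have "?B \<subseteq> V" using walk_in_V[OF g _ r] by blast
  then have "finite (\<Union>w\<in>?B. {x. E w x})"
    using Suc.IH lf unfolding locally_finite_def by (intro finite_UN_I) auto
  then show ?case using Suc.IH finite_subset[OF sub] by simp
qed

lemma far_vertex:
  assumes g: "graph V E" and inf: "infinite V" and conn: "connected_graph V E"
    and lf: "locally_finite V E" and r: "r \<in> V"
  shows "\<exists>v\<in>V. k < gdist E r v"
proof -
  have "infinite (V - {v. \<exists>n\<le>k. walk_of_length E n r v})"
    using Diff_infinite_finite[OF finite_ball[OF g lf r] inf] .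
  then obtain v where v: "v \<in> V" "\<not> (\<exists>n\<le>k. walk_of_length E n r v)"
    using infinite_imp_nonempty by blast
  obtain n where "walk_of_length E n r v" using conn r v(1) unfolding connected_graph_def by blast
  then have "walk_of_length E (gdist E r v) r v" by (rule walk_gdist)
  then show ?thesis using v by (meson not_le)
qed

lemma geodesic_exists:
  assumes "walk_of_length E n r v"
  obtains f where "f 0 = r" "f (gdist E r v) = v" "\<forall>i<gdist E r v. E (f i) (f (Suc i))"
    "\<forall>i\<le>gdist E r v. gdist E r (f i) = i"
proof -
  let ?L = "gdist E r v"
  obtain f where f: "f 0 = r" "f ?L = v" "\<forall>i<?L. E (f i) (f (Suc i))"
    using walk_gdist[OF assms] unfolding walk_fun by blast
  have "gdist E r (f i) = i" if i: "i \<le> ?L" for i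
    using gdist_le[OF walk_split(1)[OF f i]] gdist_le[OF walk_split(2)[OF f i]]
      gdist_triangle[OF walk_split(1)[OF f i] walk_split(2)[OF f i]] i by linarith
  then show ?thesis using that f by blast
qed

lemma sum_step:
  fixes g h :: "'a \<Rightarrow> int"
  assumes "finite A" "a0 \<in> A" "\<forall>a\<in>A. g a \<le> h a + 1" "g a0 \<le> h a0"
  shows "(\<Sum>a\<in>A. g a) \<le> (\<Sum>a\<in>A. h a) + int (card A) - 1"
proof -
  have "(\<Sum>a\<in>A. g a) = g a0 + (\<Sum>a\<in>A-{a0}. g a)" using assms by (simp add: sum.remove)
  also have "(\<Sum>a\<in>A-{a0}. g a) \<le> (\<Sum>a\<in>A-{a0}. h a + 1)" using assms by (intro sum_mono) auto
  also have "(\<Sum>a\<in>A-{a0}. h a + 1) = (\<Sum>a\<in>A-{a0}. h a) + int (card A) - 1"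
  proof -
    have "card A > 0" using assms by (auto simp: card_gt_0_iff)
    then have "card A \<ge> 1" by simp
    then show ?thesis using assms by (simp add: sum.distrib card_Diff_singleton of_nat_diff)
  qed
  finally have "(\<Sum>a\<in>A. g a) \<le> h a0 + (\<Sum>a\<in>A-{a0}. h a) + int (card A) - 1" using assms by linarith
  also have "h a0 + (\<Sum>a\<in>A-{a0}. h a) = (\<Sum>a\<in>A. h a)" using assms by (simp add: sum.remove)
  finally show ?thesis .
qed

lemma sum_slow_growth:
  fixes d :: "nat \<Rightarrow> 'a \<Rightarrow> nat"
  assumes A: "finite A"
    and le: "\<forall>i<L. \<forall>a\<in>A. d (Suc i) a \<le> d i a + 1"
    and stall: "\<forall>i<L. \<exists>a\<in>A. d (Suc i) a \<le> d i a"
    and i: "i \<le> L"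
  shows "(\<Sum>a\<in>A. int (d i a)) \<le> (\<Sum>a\<in>A. int (d 0 a)) + int i * (int (card A) - 1)"
  using i
proof (induction i)
  case 0
  then show ?case by simp
next
  case (Suc i)
  then have i: "i < L" by simp
  obtain a0 where a0: "a0 \<in> A" "d (Suc i) a0 \<le> d i a0" using stall i by blast
  have "(\<Sum>a\<in>A. int (d (Suc i) a)) \<le> (\<Sum>a\<in>A. int (d i a)) + int (card A) - 1"
    using sum_step[OF A a0(1), of "\<lambda>a. int (d (Suc i) a)" "\<lambda>a. int (d i a)"] le i a0(2) by force
  then show ?case using Suc.IH i by (simp add: algebra_simps)
qed

lemma long_geodesic_has_receding_edge:
  assumes sym: "\<And>x y. E x y \<Longrightarrow> E y x" and A: "finite A"
    and reach: "\<forall>a\<in>A. \<exists>n. walk_of_length E n r a"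
    and f: "f 0 = r" "\<forall>i<L. E (f i) (f (Suc i))" "\<forall>i\<le>L. gdist E r (f i) = i"
    and long: "2 * (\<Sum>a\<in>A. gdist E r a) < L"
  shows "\<exists>i<L. receding_edge E A (f i) (f (Suc i))"
proof (rule ccontr)
  assume none: "\<not> ?thesis"
  define S where "S = (\<Sum>a\<in>A. gdist E r a)"
  have walk_fi: "walk_of_length E (i + gdist E r a) (f i) a" if a: "a \<in> A" and i: "i \<le> L" for a i
  proof -
    obtain n where "walk_of_length E n r a" using reach a by blast
    then show ?thesis
      using walk_append[OF walk_rev[OF sym walk_split(1)[OF f(1) refl f(2) i]] walk_gdist] by simp
  qed
  have le: "\<forall>i<L. \<forall>a\<in>A. gdist E (f (Suc i)) a \<le> gdist E (f i) a + 1"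
  proof (intro allI impI ballI)
    fix i a assume "i < L" "a \<in> A"
    then show "gdist E (f (Suc i)) a \<le> gdist E (f i) a + 1"
      using gdist_edge_step[OF sym f(2)[rule_format] walk_fi] by simp
  qed
  have stall: "\<forall>i<L. \<exists>a\<in>A. gdist E (f (Suc i)) a \<le> gdist E (f i) a"
  proof (intro allI impI)
    fix i assume i: "i < L"
    then obtain a where a: "a \<in> A" "gdist E (f (Suc i)) a \<noteq> gdist E (f i) a + 1"
      using none f(2) unfolding receding_edge_def by blast
    moreover have "gdist E (f (Suc i)) a \<le> gdist E (f i) a + 1" using le i a(1) by blast
    ultimately show "\<exists>a\<in>A. gdist E (f (Suc i)) a \<le> gdist E (f i) a" by force
  qed
  have upper: "(\<Sum>a\<in>A. int (gdist E (f L) a)) \<le> int S + int L * (int (card A) - 1)"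
    using sum_slow_growth[OF A le stall, of L] f(1) unfolding S_def by simp
  have "int L - int (gdist E r a) \<le> int (gdist E (f L) a)" if a: "a \<in> A" for a
  proof -
    obtain n where ra: "walk_of_length E n r a" using reach a by blast
    have "gdist E r (f L) \<le> gdist E r a + gdist E a (f L)"
      using gdist_triangle[OF ra walk_rev[OF sym walk_fi[OF a order.refl]]] .
    then show ?thesis using f(3) gdist_sym[OF sym walk_fi[OF a order.refl]] by simp
  qed
  then have "(\<Sum>a\<in>A. int L - int (gdist E r a)) \<le> (\<Sum>a\<in>A. int (gdist E (f L) a))"
    by (rule sum_mono)
  moreover have "(\<Sum>a\<in>A. int L - int (gdist E r a)) = int L * int (card A) - int S"
    unfolding S_def by (simp add: sum_subtractf)
  ultimately have "int L \<le> 2 * int S" using upper by (simp add: algebra_simps)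
  then show False using long[folded S_def] by linarith
qed

lemma receding_edge_exists:
  assumes g: "graph V E" and inf: "infinite V" and conn: "connected_graph V E"
    and lf: "locally_finite V E" and A: "finite A" "A \<subseteq> V"
  obtains x x' where "x \<in> V" "x' \<in> V" "receding_edge E A x x'"
proof -
  have sym: "\<And>x y. E x y \<Longrightarrow> E y x" using g unfolding graph_def by blast
  obtain r where r: "r \<in> V" using inf by (metis ex_in_conv finite.emptyI)
  have reach: "\<exists>n. walk_of_length E n u v" if "u \<in> V" "v \<in> V" for u v
    using conn that unfolding connected_graph_def by blast
  obtain v where v: "v \<in> V" "2 * (\<Sum>a\<in>A. gdist E r a) < gdist E r v"
    using far_vertex[OF g inf conn lf r] by blast
  obtain f where f: "f 0 = r" "\<forall>i<gdist E r v. E (f i) (f (Suc i))"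
      "\<forall>i\<le>gdist E r v. gdist E r (f i) = i"
    using geodesic_exists reach[OF r v(1)] by metis
  obtain i where i: "i < gdist E r v" "receding_edge E A (f i) (f (Suc i))"
    using long_geodesic_has_receding_edge[OF sym A(1) _ f v(2)] reach r A(2) by blast
  have "f i \<in> V" "f (Suc i) \<in> V" using f(2) i(1) g unfolding graph_def by auto
  then show ?thesis using that i(2) by blast
qed

theorem corollary2:
  fixes V1 :: "'a set" and E1 :: "'a \<Rightarrow> 'a \<Rightarrow> bool"
    and V2 :: "'b set" and E2 :: "'b \<Rightarrow> 'b \<Rightarrow> bool"
  assumes "graph V1 E1" and "graph V2 E2"
    and "infinite V1" and "infinite V2"
    and "connected_graph V1 E1" and "connected_graph V2 E2"
    and "locally_finite V1 E1" and "locally_finite V2 E2"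
  shows "metric_dim (V1 \<times> V2) (box_edge V1 E1 V2 E2) = \<infinity>"
proof -
  have "\<not> resolving_set (V1 \<times> V2) (box_edge V1 E1 V2 E2) W" if W: "finite W" for W
  proof
    assume res: "resolving_set (V1 \<times> V2) (box_edge V1 E1 V2 E2) W"
    then have WV: "fst ` W \<subseteq> V1" "snd ` W \<subseteq> V2" unfolding resolving_set_def by auto
    obtain x x' where x: "x \<in> V1" "x' \<in> V1" "receding_edge E1 (fst ` W) x x'"
      using receding_edge_exists[OF assms(1,3,5,7) finite_imageI[OF W] WV(1)] .
    obtain y y' where y: "y \<in> V2" "y' \<in> V2" "receding_edge E2 (snd ` W) y y'"
      using receding_edge_exists[OF assms(2,4,6,8) finite_imageI[OF W] WV(2)] .
    have "(x', y) \<noteq> (x, y')" using x(3) assms(1) unfolding receding_edge_def graph_def by auto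
    then obtain p where p: "p \<in> W" "resolves (box_edge V1 E1 V2 E2) p (x', y) (x, y')"
      using res x y unfolding resolving_set_def by blast
    have "fst p \<in> fst ` W" "snd p \<in> snd ` W" using p(1) by auto
    then show False
      using p(2) receding_edges_twins[OF assms(5,6) x y _ WV(1) _ WV(2)]
      unfolding resolves_def by (metis prod.collapse)
  qed
  then show ?thesis unfolding metric_dim_def by simp
qed

end
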